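(* Let $k$ and $\ell$ be positive integers with $k\ge 3$. Then there exists a positive integer $N_2$ such that $px_{k,\ell}(K_{n,n})=2$ for every integer $n\ge N_2$.
   Context: All graphs are finite, simple and undirected; $K_{n,n}$ is the complete bipartite graph with both parts of size $n$. An edge-coloring of a graph may assign the same color to adjacent edges. A tree $T$ in an edge-colored graph is a proper tree if no two adjacent edges of $T$ receive the same color. For $S\subseteq V(G)$ with $|S|\ge 2$, an $S$-tree is a tree in $G$ containing all vertices of $S$. $S$-trees $T_1,\dots,T_\ell$ are internally disjoint if $E(T_i)\cap E(T_j)=\emptyset$ and $V(T_i)\cap V(T_j)=S$ for all $i\ne j$. For a connected graph $G$ of order $n$ and integers $k,\ell$ with $2\le k\le n$ and $1\le \ell\le \kappa_k(G)$ (where $\kappa_k(G)$ is the minimum, over all $k$-subsets $S$ of $V(G)$, of the maximum number of internally disjoint $S$-trees), the $(k,\ell)$-proper index $px_{k,\ell}(G)$ is the minimum number of colors in an edge-coloring of $G$ such that for every $k$-subset $S$ of $V(G)$ there exist $\ell$ internally disjoint proper $S$-trees. *)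

theory Defs
  imports Main
begin

type_synonym 'a ugraph = "'a set \<times> 'a set set"

definition verts :: "'a ugraph \<Rightarrow> 'a set" where "verts G = fst G"
definition edges :: "'a ugraph \<Rightarrow> 'a set set" where "edges G = snd G"

definition simple_graph :: "'a ugraph \<Rightarrow> bool" where
  "simple_graph G \<longleftrightarrow> finite (verts G) \<and>
     (\<forall>e\<in>edges G. \<exists>x y. x \<noteq> y \<and> e = {x, y} \<and> x \<in> verts G \<and> y \<in> verts G)"

definition connected_graph :: "'a ugraph \<Rightarrow> bool" where
  "connected_graph G \<longleftrightarrow> verts G \<noteq> {} \<and>
     (\<forall>u\<in>verts G. \<forall>v\<in>verts G. (u, v) \<in> {(x, y). {x, y} \<in> edges G}\<^sup>*)"

definition has_cycle :: "'a ugraph \<Rightarrow> bool" where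
  "has_cycle G \<longleftrightarrow> (\<exists>vs. length vs \<ge> 3 \<and> distinct vs \<and> set vs \<subseteq> verts G \<and>
     (\<forall>i < length vs. {vs ! i, vs ! ((i + 1) mod length vs)} \<in> edges G))"

definition subgraph :: "'a ugraph \<Rightarrow> 'a ugraph \<Rightarrow> bool" where
  "subgraph H G \<longleftrightarrow> verts H \<subseteq> verts G \<and> edges H \<subseteq> edges G \<and>
     (\<forall>e\<in>edges H. e \<subseteq> verts H)"

definition tree_in :: "'a ugraph \<Rightarrow> 'a ugraph \<Rightarrow> bool" where
  "tree_in T G \<longleftrightarrow> subgraph T G \<and> connected_graph T \<and> \<not> has_cycle T"

definition S_tree :: "'a ugraph \<Rightarrow> 'a set \<Rightarrow> 'a ugraph \<Rightarrow> bool" where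
  "S_tree G S T \<longleftrightarrow> tree_in T G \<and> S \<subseteq> verts T"

definition int_disjoint_S_trees ::
  "'a ugraph \<Rightarrow> 'a set \<Rightarrow> nat \<Rightarrow> (nat \<Rightarrow> 'a ugraph) \<Rightarrow> bool" where
  "int_disjoint_S_trees G S l T \<longleftrightarrow> (\<forall>i<l. S_tree G S (T i)) \<and>
     (\<forall>i<l. \<forall>j<l. i \<noteq> j \<longrightarrow>
        edges (T i) \<inter> edges (T j) = {} \<and> verts (T i) \<inter> verts (T j) = S)"

definition kappa :: "nat \<Rightarrow> 'a ugraph \<Rightarrow> nat" where
  "kappa k G = Min {Max {l. \<exists>T. int_disjoint_S_trees G S l T} | S. S \<subseteq> verts G \<and> card S = k}"

text \<open>Edge colourings (with colours in a set C, values on non-edges irrelevant);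
  proper trees.\<close>
definition proper_tree :: "('a set \<Rightarrow> nat) \<Rightarrow> 'a ugraph \<Rightarrow> bool" where
  "proper_tree c T \<longleftrightarrow> (\<forall>e1\<in>edges T. \<forall>e2\<in>edges T.
      e1 \<noteq> e2 \<and> e1 \<inter> e2 \<noteq> {} \<longrightarrow> c e1 \<noteq> c e2)"

definition kl_proper_colouring ::
  "nat \<Rightarrow> nat \<Rightarrow> 'a ugraph \<Rightarrow> nat \<Rightarrow> ('a set \<Rightarrow> nat) \<Rightarrow> bool" where
  "kl_proper_colouring k l G m c \<longleftrightarrow> c ` edges G \<subseteq> {..<m} \<and>
     (\<forall>S. S \<subseteq> verts G \<and> card S = k \<longrightarrow>
        (\<exists>T. int_disjoint_S_trees G S l T \<and> (\<forall>i<l. proper_tree c (T i))))"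

text \<open>The (k,l)-proper index (meaningful when 2 <= k <= |V(G)| and 1 <= l <= kappa_k(G)).\<close>
definition px :: "nat \<Rightarrow> nat \<Rightarrow> 'a ugraph \<Rightarrow> nat" where
  "px k l G = (LEAST m. \<exists>c. kl_proper_colouring k l G m c)"

definition K_nn :: "nat \<Rightarrow> nat ugraph" where
  "K_nn n = ({..<2 * n}, {{i, j} | i j. i < n \<and> n \<le> j \<and> j < 2 * n})"

end

theory Submission
  imports Defs
begin

text \<open>Colour each edge of \<open>K_nn n\<close> by the parity of the sum of its ends. Sorting vertices into
  four classes by side and parity, every path that runs through the classes cyclically is a proper
  tree. For a \<open>k\<close>-set \<open>S\<close>, the \<open>i\<close>-th \<open>S\<close>-tree is such a path of \<open>8 k\<close> vertices passing through the
  vertices of \<open>S\<close> one by one, all other positions being taken by fresh vertices reserved for tree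
  \<open>i\<close>; since every class has at least \<open>n div 2\<close> vertices, \<open>l\<close> such paths exist once
  \<open>n \<ge> 4 k l + 2 k\<close>, and as no two vertices of \<open>S\<close> are consecutive on a path, the paths are
  edge-disjoint. One colour never suffices for \<open>k \<ge> 3\<close>, since a monochromatic proper tree has at
  most one edge. The same trees give \<open>l \<le> kappa k (K_nn n)\<close>, the maximum in the definition of
  \<open>kappa\<close> being finite because disjoint trees use disjoint edges.\<close>

definition path_graph :: "'a list \<Rightarrow> 'a ugraph" where
  "path_graph xs = (set xs, {{xs ! i, xs ! Suc i} | i. Suc i < length xs})"

lemma verts_path_graph [simp]: "verts (path_graph xs) = set xs"
  by (simp add: path_graph_def verts_def)

lemma edges_path_graph: "edges (path_graph xs) = {{xs ! i, xs ! Suc i} | i. Suc i < length xs}"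
  by (simp add: path_graph_def edges_def)

lemma edge_path_graph_subset: "e \<in> edges (path_graph xs) \<Longrightarrow> e \<subseteq> set xs"
  by (auto simp: edges_path_graph)

lemma path_graph_edge_iff:
  assumes "distinct xs" "p < length xs" "q < length xs"
  shows "{xs ! p, xs ! q} \<in> edges (path_graph xs) \<longleftrightarrow> p = Suc q \<or> q = Suc p"
proof
  assume "{xs ! p, xs ! q} \<in> edges (path_graph xs)"
  then obtain i where i: "Suc i < length xs" "{xs ! p, xs ! q} = {xs ! i, xs ! Suc i}"
    by (auto simp: edges_path_graph)
  then have "(p = i \<and> q = Suc i) \<or> (p = Suc i \<and> q = i)"
    using assms nth_eq_iff_index_eq[OF assms(1)] by (auto simp: doubleton_eq_iff)
  then show "p = Suc q \<or> q = Suc p" by auto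
next
  assume "p = Suc q \<or> q = Suc p"
  then show "{xs ! p, xs ! q} \<in> edges (path_graph xs)"
    using assms by (auto simp: edges_path_graph insert_commute)
qed

lemma path_graph_connected:
  assumes "xs \<noteq> []"
  shows "connected_graph (path_graph xs)"
proof -
  let ?R = "{(x, y). {x, y} \<in> edges (path_graph xs)}"
  have head: "(xs ! 0, xs ! i) \<in> ?R\<^sup>* \<and> (xs ! i, xs ! 0) \<in> ?R\<^sup>*" if "i < length xs" for i
    using that
  proof (induction i)
    case (Suc i)
    then have "(xs ! i, xs ! Suc i) \<in> ?R" "(xs ! Suc i, xs ! i) \<in> ?R"
      by (auto simp: edges_path_graph insert_commute)
    with Suc show ?case
      by (meson Suc_lessD converse_rtrancl_into_rtrancl rtrancl.rtrancl_into_rtrancl)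
  qed simp
  have "(u, v) \<in> ?R\<^sup>*" if uv: "u \<in> set xs" "v \<in> set xs" for u v
  proof -
    obtain i j where "i < length xs" "u = xs ! i" "j < length xs" "v = xs ! j"
      using uv by (auto simp: in_set_conv_nth)
    then show ?thesis using head by (meson rtrancl_trans)
  qed
  then show ?thesis using assms unfolding connected_graph_def by simp
qed

lemma cycle_neighbours:
  assumes "length vs \<ge> 3" "distinct vs" "x \<in> set vs"
    and cyc: "\<forall>i < length vs. {vs ! i, vs ! ((i + 1) mod length vs)} \<in> E"
  shows "\<exists>a b. a \<in> set vs \<and> b \<in> set vs \<and> a \<noteq> b \<and> {x, a} \<in> E \<and> {x, b} \<in> E"
proof -
  define L where "L = length vs"
  obtain i where i: "i < L" "x = vs ! i" using assms(3) by (auto simp: in_set_conv_nth L_def)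
  define i' where "i' = (if i = 0 then L - 1 else i - 1)"
  have L: "L \<ge> 3" using assms(1) by (simp add: L_def)
  have succ: "(i + 1) mod L < L" "i' < L" using L i by (simp, simp add: i'_def, linarith)
  have "(i' + 1) mod L = i"
    using i L by (cases "i = 0") (simp_all add: i'_def)
  then have "{vs ! i', x} \<in> E" using cyc succ(2) i by (metis L_def)
  moreover have "{x, vs ! ((i + 1) mod L)} \<in> E" using cyc i by (simp add: L_def)
  moreover have "(i + 1) mod L \<noteq> i'"
    using i L by (cases "i + 1 = L") (auto simp: i'_def)
  then have "vs ! ((i + 1) mod L) \<noteq> vs ! i'"
    using succ nth_eq_iff_index_eq[OF assms(2)] by (simp add: L_def)
  ultimately show ?thesis using succ by (metis L_def insert_commute nth_mem)
qed

text \<open>The vertex of a cycle lying furthest along the path would have two distinct neighbours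
  on the cycle, both of which can only be its predecessor on the path.\<close>

lemma path_graph_acyclic:
  assumes "distinct xs"
  shows "\<not> has_cycle (path_graph xs)"
proof
  assume "has_cycle (path_graph xs)"
  then obtain vs where vs: "length vs \<ge> 3" "distinct vs" "set vs \<subseteq> set xs"
    and cyc: "\<forall>i < length vs. {vs ! i, vs ! ((i + 1) mod length vs)} \<in> edges (path_graph xs)"
    unfolding has_cycle_def by auto
  define P where "P = {p. p < length xs \<and> xs ! p \<in> set vs}"
  have "P \<noteq> {}" using vs(1,3) by (fastforce simp: P_def in_set_conv_nth)
  moreover have "finite P" by (simp add: P_def)
  ultimately have M: "Max P \<in> P" and le_M: "\<And>p. p \<in> P \<Longrightarrow> p \<le> Max P"
    by simp_all
  have "xs ! Max P \<in> set vs" using M by (simp add: P_def)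
  then obtain a b where ab: "a \<in> set vs" "b \<in> set vs" "a \<noteq> b"
    "{xs ! Max P, a} \<in> edges (path_graph xs)" "{xs ! Max P, b} \<in> edges (path_graph xs)"
    using cycle_neighbours[OF vs(1,2) _ cyc] by blast
  have pred: "y = xs ! (Max P - 1)"
    if y: "y \<in> set vs" "{xs ! Max P, y} \<in> edges (path_graph xs)" for y
  proof -
    have "y \<in> set xs" using y(1) vs(3) by blast
    then obtain q where q: "q < length xs" "y = xs ! q" by (metis in_set_conv_nth)
    then have "q \<le> Max P" using le_M y(1) by (simp add: P_def)
    moreover have "Max P = Suc q \<or> q = Suc (Max P)"
      using path_graph_edge_iff[OF assms, of "Max P" q] M q y(2) by (simp add: P_def)
    ultimately show ?thesis using q by auto
  qed
  show False using pred[OF ab(1,4)] pred[OF ab(2,5)] ab(3) by simp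
qed

lemma S_tree_path_graph:
  assumes "distinct xs" "xs \<noteq> []" "S \<subseteq> set xs" "set xs \<subseteq> verts G"
    and "\<And>t. Suc t < length xs \<Longrightarrow> {xs ! t, xs ! Suc t} \<in> edges G"
  shows "S_tree G S (path_graph xs)"
  using assms path_graph_connected[OF assms(2)] path_graph_acyclic[OF assms(1)]
  unfolding S_tree_def tree_in_def subgraph_def by (auto simp: edges_path_graph)

lemma proper_tree_path_graph:
  assumes "distinct xs"
    and "\<And>t. Suc (Suc t) < length xs \<Longrightarrow> c {xs ! t, xs ! Suc t} \<noteq> c {xs ! Suc t, xs ! Suc (Suc t)}"
  shows "proper_tree c (path_graph xs)"
  unfolding proper_tree_def
proof (intro ballI impI)
  fix e1 e2 assume e: "e1 \<in> edges (path_graph xs)" "e2 \<in> edges (path_graph xs)"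
    and adj: "e1 \<noteq> e2 \<and> e1 \<inter> e2 \<noteq> {}"
  obtain p q where p: "Suc p < length xs" "e1 = {xs ! p, xs ! Suc p}"
    and q: "Suc q < length xs" "e2 = {xs ! q, xs ! Suc q}"
    using e by (auto simp: edges_path_graph)
  obtain z where "z \<in> e1" "z \<in> e2" using adj by blast
  then obtain a b where "a \<in> {p, Suc p}" "b \<in> {q, Suc q}" "xs ! a = xs ! b"
    using p q by auto
  then have "a = b" using p q nth_eq_iff_index_eq[OF assms(1), of a b] by auto
  then have "q = Suc p \<or> p = Suc q" using \<open>a \<in> _\<close> \<open>b \<in> _\<close> adj p q by auto
  then show "c e1 \<noteq> c e2" using assms(2) p q by (metis insert_commute)
qed

lemma S_tree_edges_subset: "S_tree G S T \<Longrightarrow> edges T \<subseteq> edges G"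
  unfolding S_tree_def tree_in_def subgraph_def by auto

lemma connected_graph_edge_at:
  assumes "connected_graph T" "u \<in> verts T" "v \<in> verts T" "u \<noteq> v"
  shows "\<exists>y. {u, y} \<in> edges T"
proof -
  have "(u, v) \<in> {(x, y). {x, y} \<in> edges T}\<^sup>*"
    using assms unfolding connected_graph_def by blast
  then show ?thesis using assms(4) by (cases rule: converse_rtranclE) auto
qed

lemma int_disjoint_S_trees_le_card_edges:
  assumes T: "int_disjoint_S_trees G S l T" and "finite (edges G)"
    and "u \<in> S" "v \<in> S" "u \<noteq> v"
  shows "l \<le> card (edges G)"
proof -
  have tree: "S_tree G S (T i)" if "i < l" for i
    using T that unfolding int_disjoint_S_trees_def by blast
  have "\<exists>e. e \<in> edges (T i)" if "i < l" for i
  proof -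
    have "connected_graph (T i)" "S \<subseteq> verts (T i)"
      using tree[OF that] unfolding S_tree_def tree_in_def by simp_all
    then show ?thesis using connected_graph_edge_at[of "T i" u v] assms(3-5) by blast
  qed
  then obtain f where f: "\<And>i. i < l \<Longrightarrow> f i \<in> edges (T i)" by metis
  have "inj_on f {..<l}"
  proof (rule inj_onI)
    fix i j assume ij: "i \<in> {..<l}" "j \<in> {..<l}" "f i = f j"
    show "i = j"
    proof (rule ccontr)
      assume "i \<noteq> j"
      then have "edges (T i) \<inter> edges (T j) = {}"
        using T ij unfolding int_disjoint_S_trees_def by simp
      then show False using f ij by (metis disjoint_iff lessThan_iff)
    qed
  qed
  moreover have "f ` {..<l} \<subseteq> edges G"
  proof (rule image_subsetI)
    fix i assume "i \<in> {..<l}"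
    then show "f i \<in> edges G" using S_tree_edges_subset[OF tree[of i]] f[of i] by auto
  qed
  ultimately have "card {..<l} \<le> card (edges G)" using card_inj_on_le assms(2) by blast
  then show ?thesis by simp
qed

text \<open>Adjacent edges of a proper graph differ in colour, so in a monochromatic one no two edges
  meet; connectedness then leaves room for a single edge.\<close>

lemma monochromatic_proper_tree_card_verts:
  assumes conn: "connected_graph T" and proper: "proper_tree c T"
    and mono: "\<And>e. e \<in> edges T \<Longrightarrow> c e = a"
  shows "card (verts T) \<le> 2"
proof -
  have meet: "e1 = e2" if "e1 \<in> edges T" "e2 \<in> edges T" "e1 \<inter> e2 \<noteq> {}" for e1 e2
    using proper mono that unfolding proper_tree_def by metis
  obtain u where u: "u \<in> verts T" using conn unfolding connected_graph_def by blast
  have nbr: "x = u \<or> {u, x} \<in> edges T" if "x \<in> verts T" for x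
  proof -
    have "(u, x) \<in> {(x, y). {x, y} \<in> edges T}\<^sup>*"
      using conn u that unfolding connected_graph_def by blast
    then show ?thesis
    proof (induction rule: rtrancl_induct)
      case (step y z)
      then have "{y, z} \<in> edges T" by simp
      with step.IH meet show ?case by (cases "y = u") (auto simp: doubleton_eq_iff)
    qed simp
  qed
  obtain v where "verts T \<subseteq> {u, v}"
  proof (cases "\<exists>v. {u, v} \<in> edges T")
    case True
    then obtain v where v: "{u, v} \<in> edges T" by blast
    have "x = u \<or> x = v" if "x \<in> verts T" for x
      using nbr[OF that] meet[OF v] by (auto simp: doubleton_eq_iff)
    then show thesis using that by blast
  next
    case False
    then show thesis using nbr that by blast
  qed
  then have "card (verts T) \<le> card {u, v}" by (intro card_mono) auto
  also have "\<dots> \<le> 2" by (simp add: card_insert_if)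
  finally show ?thesis .
qed

lemma le_kappa:
  assumes "finite (verts G)" "finite (edges G)" "2 \<le> k" "k \<le> card (verts G)"
    and trees: "\<And>S. S \<subseteq> verts G \<Longrightarrow> card S = k \<Longrightarrow> \<exists>T. int_disjoint_S_trees G S l T"
  shows "l \<le> kappa k G"
proof -
  define F where "F S = {l'. \<exists>T. int_disjoint_S_trees G S l' T}" for S
  define K where "K = {S. S \<subseteq> verts G \<and> card S = k}"
  have "l \<le> Max (F S)" if S: "S \<in> K" for S
  proof -
    have "2 \<le> card S" using S assms(3) by (simp add: K_def)
    then obtain u v where uv: "u \<in> S" "v \<in> S" "u \<noteq> v"
      by (metis card_2_iff' obtain_subset_with_card_n subset_iff)
    have "F S \<subseteq> {..card (edges G)}"
    proof
      fix l' assume "l' \<in> F S"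
      then obtain T where "int_disjoint_S_trees G S l' T" by (auto simp: F_def)
      then show "l' \<in> {..card (edges G)}"
        using int_disjoint_S_trees_le_card_edges[OF _ assms(2) uv] by simp
    qed
    then have "finite (F S)" by (rule finite_subset) simp
    moreover have "l \<in> F S" using trees S by (auto simp: F_def K_def)
    ultimately show ?thesis by (rule Max_ge)
  qed
  moreover have "finite K" using assms(1) by (simp add: K_def)
  moreover have "K \<noteq> {}"
    using obtain_subset_with_card_n[OF assms(4)] by (auto simp: K_def)
  ultimately have "l \<le> Min ((\<lambda>S. Max (F S)) ` K)" by (subst Min_ge_iff) auto
  also have "(\<lambda>S. Max (F S)) ` K = {Max (F S) | S. S \<subseteq> verts G \<and> card S = k}"
    by (auto simp: K_def)
  finally show ?thesis unfolding kappa_def F_def .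
qed

lemma px_eq_2:
  assumes "finite (verts G)" "3 \<le> k" "k \<le> card (verts G)" "1 \<le> l"
    and "kl_proper_colouring k l G 2 c"
  shows "px k l G = 2"
  unfolding px_def
proof (rule Least_equality)
  show "\<exists>c. kl_proper_colouring k l G 2 c" using assms(5) by blast
next
  fix m assume "\<exists>c'. kl_proper_colouring k l G m c'"
  then obtain c' where c': "c' ` edges G \<subseteq> {..<m}"
    "\<And>S. S \<subseteq> verts G \<Longrightarrow> card S = k \<Longrightarrow>
       \<exists>T. int_disjoint_S_trees G S l T \<and> (\<forall>i<l. proper_tree c' (T i))"
    unfolding kl_proper_colouring_def by blast
  obtain S where S: "S \<subseteq> verts G" "card S = k" using obtain_subset_with_card_n[OF assms(3)] by metis
  then obtain T where T: "int_disjoint_S_trees G S l T" "\<forall>i<l. proper_tree c' (T i)"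
    using c'(2) by blast
  then have tree: "S_tree G S (T 0)" and proper: "proper_tree c' (T 0)"
    using assms(4) unfolding int_disjoint_S_trees_def by simp_all
  have sub: "S \<subseteq> verts (T 0)" "verts (T 0) \<subseteq> verts G"
    using tree unfolding S_tree_def tree_in_def subgraph_def by simp_all
  show "2 \<le> m"
  proof (rule ccontr)
    assume "\<not> 2 \<le> m"
    then have "c' e = 0" if "e \<in> edges (T 0)" for e
      using c'(1) S_tree_edges_subset[OF tree] that by fastforce
    then have "card (verts (T 0)) \<le> 2"
      using monochromatic_proper_tree_card_verts proper tree unfolding S_tree_def tree_in_def by blast
    moreover have "k \<le> card (verts (T 0))"
      using card_mono[OF finite_subset[OF sub(2) assms(1)] sub(1)] S(2) by simp
    ultimately show False using assms(2) by simp
  qed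
qed

lemma verts_K_nn: "verts (K_nn n) = {..<2 * n}"
  by (simp add: K_nn_def verts_def)

lemma edges_K_nn: "edges (K_nn n) = {{i, j} | i j. i < n \<and> n \<le> j \<and> j < 2 * n}"
  by (simp add: K_nn_def edges_def)

lemma finite_edges_K_nn: "finite (edges (K_nn n))"
proof (rule finite_subset)
  show "edges (K_nn n) \<subseteq> Pow {..<2 * n}" by (auto simp: edges_K_nn)
qed simp

definition parity_colouring :: "nat set \<Rightarrow> nat" where
  "parity_colouring e = (\<Sum>x\<in>e. x) mod 2"

text \<open>The class of a vertex is its side (0 left, 1 right) plus twice its parity. Along a path through
  the classes 0, 1, 2, 3, 0, ... sides alternate and vertices at distance two differ in parity.\<close>

definition vertex_class :: "nat \<Rightarrow> nat \<Rightarrow> nat" where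
  "vertex_class n v = (if v < n then 0 else 1) + 2 * (v mod 2)"

lemma vertex_class_less_4: "vertex_class n v < 4"
  by (simp add: vertex_class_def mod2_eq_if)

lemma edge_K_nn_if_classes:
  assumes "u < 2 * n" "v < 2 * n" "vertex_class n u mod 2 \<noteq> vertex_class n v mod 2"
  shows "{u, v} \<in> edges (K_nn n)"
proof (cases "u < n")
  case True
  then have "n \<le> v" using assms(3) by (auto simp: vertex_class_def split: if_splits)
  then show ?thesis using True assms(2) unfolding edges_K_nn by blast
next
  case False
  then have "v < n" using assms(3) by (auto simp: vertex_class_def split: if_splits)
  then have "{v, u} \<in> edges (K_nn n)"
    using False assms(1) unfolding edges_K_nn by (blast intro: leI)
  then show ?thesis by (simp add: insert_commute)
qed

lemma parity_colouring_adjacent_edges: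
  assumes "u \<noteq> v" "v \<noteq> w" "u mod 2 \<noteq> w mod 2"
  shows "parity_colouring {u, v} \<noteq> parity_colouring {v, w}"
  using assms by (auto simp: parity_colouring_def mod2_eq_if)

lemma vertex_class_div_2: "vertex_class n v div 2 = v mod 2"
  by (simp add: vertex_class_def)

lemma class_path_S_tree:
  assumes "distinct xs" "xs \<noteq> []" "S \<subseteq> set xs"
    and classes: "\<And>t. t < length xs \<Longrightarrow> xs ! t < 2 * n \<and> vertex_class n (xs ! t) = t mod 4"
  shows "S_tree (K_nn n) S (path_graph xs)" "proper_tree parity_colouring (path_graph xs)"
proof -
  have "set xs \<subseteq> verts (K_nn n)"
  proof
    fix v assume "v \<in> set xs"
    then obtain t where "t < length xs" "v = xs ! t" by (metis in_set_conv_nth)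
    then show "v \<in> verts (K_nn n)" using classes by (simp add: verts_K_nn)
  qed
  moreover have "{xs ! t, xs ! Suc t} \<in> edges (K_nn n)" if "Suc t < length xs" for t
  proof (rule edge_K_nn_if_classes)
    have "m mod 4 mod 2 = m mod 2" for m :: nat by (simp add: mod_mod_cancel)
    moreover have "t mod 2 \<noteq> Suc t mod 2" by (simp add: mod_Suc)
    ultimately show "vertex_class n (xs ! t) mod 2 \<noteq> vertex_class n (xs ! Suc t) mod 2"
      using classes[of t] classes[of "Suc t"] that by simp
  qed (use classes that in auto)
  ultimately show "S_tree (K_nn n) S (path_graph xs)"
    by (rule S_tree_path_graph[OF assms(1-3)])
  have "parity_colouring {xs ! t, xs ! Suc t} \<noteq> parity_colouring {xs ! Suc t, xs ! Suc (Suc t)}"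
    if "Suc (Suc t) < length xs" for t
  proof (rule parity_colouring_adjacent_edges)
    show "xs ! t \<noteq> xs ! Suc t" "xs ! Suc t \<noteq> xs ! Suc (Suc t)"
      using nth_eq_iff_index_eq[OF assms(1)] that by simp_all
    have "t mod 4 div 2 \<noteq> Suc (Suc t) mod 4 div 2" by (simp add: mod_Suc)
    moreover have "vertex_class n (xs ! t) = t mod 4"
      "vertex_class n (xs ! Suc (Suc t)) = Suc (Suc t) mod 4"
      using classes that by simp_all
    ultimately show "xs ! t mod 2 \<noteq> xs ! Suc (Suc t) mod 2" by (metis vertex_class_div_2)
  qed
  then show "proper_tree parity_colouring (path_graph xs)"
    by (rule proper_tree_path_graph[OF assms(1)])
qed

lemma card_vertex_class:
  assumes "r < 4"
  shows "n div 2 \<le> card {v. v < 2 * n \<and> vertex_class n v = r}"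
proof -
  \<comment> \<open>even \<open>r\<close>: the left side; odd \<open>r\<close>: the right side, starting at the first even vertex \<open>\<ge> n\<close>\<close>
  define f where "f j = 2 * j + r div 2 + (if odd r then 2 * ((n + 1) div 2) else 0)" for j
  have "inj_on f {..<n div 2}" by (auto intro: inj_onI simp: f_def)
  moreover have "f ` {..<n div 2} \<subseteq> {v. v < 2 * n \<and> vertex_class n v = r}"
  proof
    fix v assume "v \<in> f ` {..<n div 2}"
    then obtain j where j: "j < n div 2" "v = f j" by blast
    have "r = 0 \<or> r = 1 \<or> r = 2 \<or> r = 3" using assms by linarith
    moreover have "n div 2 + (n + 1) div 2 = n" by linarith
    ultimately show "v \<in> {v. v < 2 * n \<and> vertex_class n v = r}"
      using j by (elim disjE) (auto simp: f_def vertex_class_def)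
  qed
  ultimately show ?thesis by (metis card_lessThan card_inj_on_le finite_Collect_conjI finite_lessThan lessThan_def)
qed

locale tree_packing =
  fixes n k l :: nat and S :: "nat set" and s :: "nat \<Rightarrow> nat" and filler :: "nat \<Rightarrow> nat \<times> nat \<Rightarrow> nat"
  assumes enum_S: "bij_betw s {..<k} S"
    and S_verts: "S \<subseteq> {..<2 * n}"
    and inj_filler: "\<And>r. r < 4 \<Longrightarrow> inj_on (filler r) ({..<l} \<times> {..<2 * k})"
    and filler_class: "\<And>r. r < 4 \<Longrightarrow>
       filler r ` ({..<l} \<times> {..<2 * k}) \<subseteq> {v. v < 2 * n \<and> vertex_class n v = r} - S"
begin

text \<open>Tree \<open>i\<close> is the path \<open>route i 0, \<dots>, route i (8 * k - 1)\<close>, whose \<open>t\<close>-th vertex has class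
  \<open>t mod 4\<close>. In block \<open>b\<close> of eight positions the vertex \<open>s b\<close> of \<open>S\<close> sits at the position of its class
  in the first half, so no two vertices of \<open>S\<close> are consecutive; all other positions get fresh
  filler vertices, private to the tree: \<open>filler r (i, q)\<close> is the \<open>q\<close>-th vertex of class \<open>r\<close>
  reserved for tree \<open>i\<close>.\<close>

definition route :: "nat \<Rightarrow> nat \<Rightarrow> nat" where
  "route i t = (if t mod 8 = vertex_class n (s (t div 8)) then s (t div 8)
                else filler (t mod 4) (i, t div 4))"

lemma filler_at:
  assumes "i < l" "t < 8 * k"
  shows "filler (t mod 4) (i, t div 4) < 2 * n \<and>
    vertex_class n (filler (t mod 4) (i, t div 4)) = t mod 4 \<and> filler (t mod 4) (i, t div 4) \<notin> S"
proof -
  have "(i, t div 4) \<in> {..<l} \<times> {..<2 * k}" using assms by auto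
  then show ?thesis using filler_class[of "t mod 4"] by auto
qed

lemma enum_S_at: "t < 8 * k \<Longrightarrow> s (t div 8) \<in> S"
  using enum_S by (auto simp: bij_betw_def)

lemma route_in_S_iff:
  assumes "i < l" "t < 8 * k"
  shows "route i t \<in> S \<longleftrightarrow> t mod 8 = vertex_class n (s (t div 8))"
  using filler_at[OF assms] enum_S_at[OF assms(2)] by (simp add: route_def)

lemma route_class:
  assumes "i < l" "t < 8 * k"
  shows "route i t < 2 * n \<and> vertex_class n (route i t) = t mod 4"
proof (cases "t mod 8 = vertex_class n (s (t div 8))")
  case True
  have "t mod 8 mod 4 = t mod 4" by (simp add: mod_mod_cancel)
  then have "t mod 4 = t mod 8" using True vertex_class_less_4[of n "s (t div 8)"] by simp
  then show ?thesis using True S_verts enum_S_at[OF assms(2)] by (auto simp: route_def)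
next
  case False
  then show ?thesis using filler_at[OF assms] by (simp add: route_def)
qed

lemma route_eq:
  assumes "i < l" "i' < l" "t < 8 * k" "t' < 8 * k" and eq: "route i t = route i' t'"
  shows "t = t' \<and> (i = i' \<or> route i t \<in> S)"
proof -
  have mod4: "t mod 4 = t' mod 4" using route_class assms by metis
  show ?thesis
  proof (cases "route i t \<in> S")
    case True
    then have in_S: "t mod 8 = vertex_class n (s (t div 8))" "t' mod 8 = vertex_class n (s (t' div 8))"
      using route_in_S_iff assms by (metis, metis)
    then have "s (t div 8) = s (t' div 8)" using eq by (simp add: route_def)
    then have "t div 8 = t' div 8" using enum_S assms(3,4) by (auto simp: bij_betw_def dest: inj_onD)
    moreover from this have "t mod 8 = t' mod 8" using in_S by simp
    ultimately show ?thesis using True by (metis div_mult_mod_eq)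
  next
    case False
    then have "t mod 8 \<noteq> vertex_class n (s (t div 8))" "t' mod 8 \<noteq> vertex_class n (s (t' div 8))"
      using route_in_S_iff assms eq by (metis, metis)
    then have "filler (t mod 4) (i, t div 4) = filler (t mod 4) (i', t' div 4)"
      using eq mod4 by (simp add: route_def)
    moreover have "(i, t div 4) \<in> {..<l} \<times> {..<2 * k}" "(i', t' div 4) \<in> {..<l} \<times> {..<2 * k}"
      using assms by auto
    ultimately have "i = i' \<and> t div 4 = t' div 4"
      using inj_filler[of "t mod 4"] by (auto dest: inj_onD)
    then show ?thesis using mod4 by (metis div_mult_mod_eq)
  qed
qed

lemma S_subset_route: "i < l \<Longrightarrow> S \<subseteq> route i ` {..<8 * k}"
proof
  fix v assume "v \<in> S"
  then obtain b where b: "b < k" "v = s b" using enum_S by (auto simp: bij_betw_def)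
  define t where "t = 8 * b + vertex_class n (s b)"
  have "t < 8 * k" "t div 8 = b" "t mod 8 = vertex_class n (s b)"
    using b vertex_class_less_4[of n "s b"] by (auto simp: t_def)
  then show "v \<in> route i ` {..<8 * k}" using b by (force simp: route_def)
qed

lemma route_Suc_notin_S:
  assumes "i < l" "Suc t < 8 * k" "route i t \<in> S"
  shows "route i (Suc t) \<notin> S"
proof
  assume "route i (Suc t) \<in> S"
  then have "Suc t mod 8 = vertex_class n (s (Suc t div 8))"
    using route_in_S_iff assms by simp
  moreover have "t mod 8 = vertex_class n (s (t div 8))"
    using route_in_S_iff assms by simp
  moreover from this have "Suc t div 8 = t div 8" "Suc t mod 8 = Suc (t mod 8)"
    using vertex_class_less_4[of n "s (t div 8)"] by (simp_all add: div_Suc mod_Suc)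
  ultimately show False by simp
qed

definition tree :: "nat \<Rightarrow> nat ugraph" where
  "tree i = path_graph (map (route i) [0..<8 * k])"

lemma verts_tree: "verts (tree i) = route i ` {..<8 * k}"
  by (simp add: tree_def atLeast0LessThan)

lemma tree_S_tree:
  assumes "0 < k" "i < l"
  shows "S_tree (K_nn n) S (tree i)" "proper_tree parity_colouring (tree i)"
proof -
  let ?xs = "map (route i) [0..<8 * k]"
  have "distinct ?xs"
    using route_eq assms(2) by (auto simp: distinct_map intro!: inj_onI)
  moreover have "?xs \<noteq> []" using assms(1) by simp
  moreover have "S \<subseteq> set ?xs"
    using S_subset_route assms(2) by (simp add: atLeast0LessThan)
  moreover have "\<And>t. t < length ?xs \<Longrightarrow> ?xs ! t < 2 * n \<and> vertex_class n (?xs ! t) = t mod 4"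
    using route_class assms(2) by simp
  ultimately show "S_tree (K_nn n) S (tree i)" "proper_tree parity_colouring (tree i)"
    unfolding tree_def by (fact class_path_S_tree)+
qed

lemma verts_tree_inter:
  assumes "i < l" "j < l" "i \<noteq> j"
  shows "verts (tree i) \<inter> verts (tree j) = S"
  using route_eq[OF assms(1,2)] S_subset_route[OF assms(1)] S_subset_route[OF assms(2)] assms(3)
  unfolding verts_tree by blast

lemma edges_tree_disjoint:
  assumes "i < l" "j < l" "i \<noteq> j"
  shows "edges (tree i) \<inter> edges (tree j) = {}"
proof (rule ccontr)
  assume "edges (tree i) \<inter> edges (tree j) \<noteq> {}"
  then obtain e where e: "e \<in> edges (tree i)" "e \<in> edges (tree j)" by blast
  then obtain t where t: "Suc t < 8 * k" "e = {route i t, route i (Suc t)}"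
    by (auto simp: tree_def edges_path_graph)
  have "e \<subseteq> verts (tree i)" "e \<subseteq> verts (tree j)"
    using edge_path_graph_subset e unfolding tree_def verts_path_graph by blast+
  then have "route i t \<in> S" "route i (Suc t) \<in> S" using verts_tree_inter[OF assms] t(2) by blast+
  then show False using route_Suc_notin_S assms(1) t(1) by blast
qed

lemma int_disjoint_trees: "0 < k \<Longrightarrow> int_disjoint_S_trees (K_nn n) S l tree"
  unfolding int_disjoint_S_trees_def using tree_S_tree verts_tree_inter edges_tree_disjoint by simp

end

lemma fillers_exist:
  assumes "r < 4" "finite S" "card S = k" "4 * k * l + 2 * k \<le> n"
  shows "\<exists>f. inj_on f ({..<l} \<times> {..<2 * k}) \<and>
    f ` ({..<l} \<times> {..<2 * k}) \<subseteq> {v. v < 2 * n \<and> vertex_class n v = r} - S"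
proof -
  let ?A = "{v. v < 2 * n \<and> vertex_class n v = r}"
  have "card ({..<l} \<times> {..<2 * k}) = 2 * k * l" by simp
  also have "\<dots> \<le> n div 2 - card S" using assms(3,4) by linarith
  also have "\<dots> \<le> card ?A - card S" using card_vertex_class[OF assms(1), of n] by linarith
  also have "\<dots> \<le> card (?A - S)" using diff_card_le_card_Diff[OF assms(2)] .
  finally show ?thesis using card_le_inj[of "{..<l} \<times> {..<2 * k}" "?A - S"] by auto
qed

lemma kl_proper_colouring_K_nn:
  assumes "0 < k" "4 * k * l + 2 * k \<le> n"
  shows "kl_proper_colouring k l (K_nn n) 2 parity_colouring"
proof -
  have "\<exists>T. int_disjoint_S_trees (K_nn n) S l T \<and> (\<forall>i<l. proper_tree parity_colouring (T i))"
    if S: "S \<subseteq> verts (K_nn n)" "card S = k" for S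
  proof -
    have "finite S" using S(1) finite_subset by (auto simp: verts_K_nn)
    then obtain s where "bij_betw s {..<k} S"
      using ex_bij_betw_nat_finite S(2) by (metis atLeast0LessThan)
    moreover obtain filler where "\<And>r. r < 4 \<Longrightarrow> inj_on (filler r) ({..<l} \<times> {..<2 * k}) \<and>
        filler r ` ({..<l} \<times> {..<2 * k}) \<subseteq> {v. v < 2 * n \<and> vertex_class n v = r} - S"
      using fillers_exist[OF _ \<open>finite S\<close> S(2) assms(2)] by metis
    ultimately interpret tree_packing n k l S s filler
      using S(1) by unfold_locales (simp_all add: verts_K_nn)
    show ?thesis using int_disjoint_trees tree_S_tree assms(1) by blast
  qed
  then show ?thesis unfolding kl_proper_colouring_def by (auto simp: parity_colouring_def)
qed

theorem theorem3p1:
  fixes k l :: nat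
  assumes "k \<ge> 3" and "l \<ge> 1"
  shows "\<exists>N2 > 0. \<forall>n \<ge> N2.
           k \<le> card (verts (K_nn n)) \<and> l \<le> kappa k (K_nn n) \<and> px k l (K_nn n) = 2"
proof (intro exI[of _ "4 * k * l + 2 * k"] conjI allI impI)
  show "0 < 4 * k * l + 2 * k" using assms(1) by simp
  fix n assume n: "4 * k * l + 2 * k \<le> n"
  then show card: "k \<le> card (verts (K_nn n))" by (simp add: verts_K_nn)
  have colouring: "kl_proper_colouring k l (K_nn n) 2 parity_colouring"
    using kl_proper_colouring_K_nn assms(1) n by simp
  then show "l \<le> kappa k (K_nn n)"
    using assms(1) card finite_edges_K_nn
    by (intro le_kappa) (auto simp: verts_K_nn kl_proper_colouring_def)
  show "px k l (K_nn n) = 2"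
    using px_eq_2[OF _ assms(1) card assms(2) colouring] by (simp add: verts_K_nn)
qed

end
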